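(* Let $I$ be an inverse semigroup generated by $k$ elements, and suppose there is a surjective idempotent-pure morphism from $I$ onto a finite semigroup $J$ of cardinality $n$. Then $|I|\le n(2^{kn}-1)$. *)

theory Defs
  imports Main
begin

definition is_inverse_semigroup :: "'a::semigroup_mult itself \<Rightarrow> bool" where
  "is_inverse_semigroup _ \<longleftrightarrow>
     (\<forall>x::'a. \<exists>!y. x * y * x = x \<and> y * x * y = y)"

definition sinv :: "'a::semigroup_mult \<Rightarrow> 'a" where
  "sinv x = (THE y. x * y * x = x \<and> y * x * y = y)"

inductive_set inv_gen :: "'a::semigroup_mult set \<Rightarrow> 'a set" for G where
  gen: "x \<in> G \<Longrightarrow> x \<in> inv_gen G"
| inv: "x \<in> inv_gen G \<Longrightarrow> sinv x \<in> inv_gen G"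
| mult: "x \<in> inv_gen G \<Longrightarrow> y \<in> inv_gen G \<Longrightarrow> x * y \<in> inv_gen G"

definition semigroup_hom :: "('a::semigroup_mult \<Rightarrow> 'b::semigroup_mult) \<Rightarrow> bool" where
  "semigroup_hom f \<longleftrightarrow> (\<forall>x y. f (x * y) = f x * f y)"

definition idempotent_pure :: "('a::semigroup_mult \<Rightarrow> 'b::semigroup_mult) \<Rightarrow> bool" where
  "idempotent_pure f \<longleftrightarrow> (\<forall>x. f x * f x = f x \<longrightarrow> x * x = x)"

end

theory Submission
  imports Defs
begin

text \<open>Write \<open>e \<le> h\<close> for \<open>e * h = e\<close> on idempotents, and let \<open>a\<^sub>1, \<dots>, a\<^sub>k\<close> be the
  generators. To an idempotent \<open>e\<close> attach the set \<open>L(e) \<subseteq> J \<times> {1..k}\<close> of all \<open>(f p, i)\<close>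
  with \<open>e \<le> (p a\<^sub>i)(p a\<^sub>i)\<^sup>-\<^sup>1\<close>. The map \<open>x \<mapsto> (f x, L(x x\<^sup>-\<^sup>1))\<close> lands in
  \<open>J \<times> (nonempty subsets of J \<times> {1..k})\<close>, a set of size \<open>n (2\<^sup>k\<^sup>n - 1)\<close>, and it is injective.

  Injectivity comes from: \<open>L(x x\<^sup>-\<^sup>1) \<subseteq> L(e)\<close> implies \<open>e \<le> x x\<^sup>-\<^sup>1\<close>, proved by induction
  on \<open>x\<close> as a word in the generators and their inverses. Idempotent-purity enters through the
  restrictions \<open>e p\<close> and \<open>e q\<close> of two elements with \<open>e\<close> below both ranges: they coincide once
  \<open>p\<^sup>-\<^sup>1 e q\<close> is idempotent, which purity guarantees whenever \<open>f\<close> maps it to an idempotent.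
  The same argument turns \<open>f x = f y\<close> and \<open>x x\<^sup>-\<^sup>1 = y y\<^sup>-\<^sup>1\<close> into \<open>x = y\<close>.\<close>

definition idem :: "'a::semigroup_mult \<Rightarrow> bool" where
  "idem e \<longleftrightarrow> e * e = e"

locale inverse_semigroup =
  fixes type :: "'a::semigroup_mult itself"
  assumes unique_inverse: "is_inverse_semigroup type"
begin

lemma sinv_props: "(x::'a) * sinv x * x = x \<and> sinv x * x * sinv x = sinv x"
proof -
  have "\<exists>!y. (x::'a) * y * x = x \<and> y * x * y = y"
    using unique_inverse unfolding is_inverse_semigroup_def by blast
  from theI'[OF this] show ?thesis unfolding sinv_def .
qed

lemma mult_sinv_mult [simp]: "(x::'a) * (sinv x * x) = x"
  and mult_sinv_mult' [simp]: "(x::'a) * (sinv x * (x * z)) = x * z"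
  and sinv_mult_sinv [simp]: "sinv (x::'a) * (x * sinv x) = sinv x"
  and sinv_mult_sinv' [simp]: "sinv (x::'a) * (x * (sinv x * z)) = sinv x * z"
  using sinv_props[of x] by (simp_all add: mult.assoc[symmetric])

lemma sinv_eqI:
  assumes "(x::'a) * y * x = x" and "y * x * y = y"
  shows "sinv x = y"
proof -
  have "\<exists>!y. (x::'a) * y * x = x \<and> y * x * y = y"
    using unique_inverse unfolding is_inverse_semigroup_def by blast
  then show ?thesis
    unfolding sinv_def by (rule the1_equality) (use assms in simp)
qed

lemma sinv_sinv [simp]: "sinv (sinv (x::'a)) = x"
  by (rule sinv_eqI) (simp_all add: sinv_props)

lemma sinv_idem: "idem (e::'a) \<Longrightarrow> sinv e = e"
  by (rule sinv_eqI) (simp_all add: idem_def)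

lemma idem_mult_sinv: "idem ((x::'a) * sinv x)"
  by (simp add: idem_def mult.assoc)

lemma idem_sinv_mult: "idem (sinv (x::'a) * x)"
  by (simp add: idem_def mult.assoc)

lemma idem_left_absorb: "idem (e::'a) \<Longrightarrow> e * (e * z) = e * z"
  by (simp add: idem_def mult.assoc[symmetric])

text \<open>The inverse \<open>x\<close> of \<open>e * g\<close> satisfies \<open>x = g * x * e\<close>, which makes \<open>x\<close>
  idempotent; idempotents being self-inverse, \<open>e * g = sinv x = x\<close>.\<close>
lemma idem_mult:
  assumes e: "idem (e::'a)" and g: "idem g"
  shows "idem (e * g)"
proof -
  define x where "x = sinv (e * g)"
  have x1: "e * g * x * (e * g) = e * g" and x2: "x * (e * g) * x = x"
    using sinv_props[of "e * g"] by (simp_all add: x_def)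
  have ee: "e * (e * z) = e * z" and gg: "g * (g * z) = g * z" for z
    using e g by (simp_all add: idem_left_absorb)
  have "sinv (e * g) = g * x * e"
  proof (rule sinv_eqI)
    have "e * g * (g * x * e) * (e * g) = e * g * x * (e * g)"
      by (simp add: mult.assoc ee gg)
    then show "e * g * (g * x * e) * (e * g) = e * g" using x1 by simp
    have "g * x * e * (e * g) * (g * x * e) = g * (x * (e * g) * x) * e"
      by (simp add: mult.assoc ee gg)
    then show "g * x * e * (e * g) * (g * x * e) = g * x * e" using x2 by simp
  qed
  then have x: "x = g * x * e" by (simp add: x_def)
  have "x * x = g * (x * (e * g) * x) * e"
    by (subst (1 2) x) (simp add: mult.assoc)
  then have "idem x" using x2 x by (simp add: idem_def)
  then have "sinv x = x" by (rule sinv_idem)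
  moreover have "sinv x = e * g" using x1 x2 by (intro sinv_eqI) (simp_all add: mult.assoc)
  ultimately show ?thesis using \<open>idem x\<close> by simp
qed

lemma idem_commute:
  assumes e: "idem (e::'a)" and g: "idem g"
  shows "e * g = g * e"
proof -
  have eg: "idem (e * g)" and ge: "idem (g * e)"
    using idem_mult e g by blast+
  have "sinv (e * g) = g * e"
  proof (rule sinv_eqI)
    have "e * g * (g * e) * (e * g) = e * g * (e * g)"
      using e g by (simp add: mult.assoc idem_left_absorb)
    then show "e * g * (g * e) * (e * g) = e * g" using eg by (simp add: idem_def)
    have "g * e * (e * g) * (g * e) = g * e * (g * e)"
      using e g by (simp add: mult.assoc idem_left_absorb)
    then show "g * e * (e * g) * (g * e) = g * e" using ge by (simp add: idem_def)
  qed
  moreover have "sinv (e * g) = e * g" using eg by (rule sinv_idem)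
  ultimately show ?thesis by simp
qed

lemma sinv_mult: "sinv ((x::'a) * y) = sinv y * sinv x"
proof (rule sinv_eqI)
  have c: "y * sinv y * (sinv x * x) = sinv x * x * (y * sinv y)"
    by (rule idem_commute[OF idem_mult_sinv idem_sinv_mult])
  have "x * y * (sinv y * sinv x) * (x * y) = x * (y * sinv y * (sinv x * x)) * y"
    by (simp only: mult.assoc)
  also have "\<dots> = x * (sinv x * x * (y * sinv y)) * y"
    by (simp only: c)
  also have "\<dots> = (x * sinv x * x) * (y * sinv y * y)"
    by (simp only: mult.assoc)
  finally show "x * y * (sinv y * sinv x) * (x * y) = x * y"
    by (simp add: sinv_props)
  have "sinv y * sinv x * (x * y) * (sinv y * sinv x) = sinv y * (sinv x * x * (y * sinv y)) * sinv x"
    by (simp only: mult.assoc)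
  also have "\<dots> = sinv y * (y * sinv y * (sinv x * x)) * sinv x"
    by (simp only: c)
  also have "\<dots> = (sinv y * y * sinv y) * (sinv x * x * sinv x)"
    by (simp only: mult.assoc)
  finally show "sinv y * sinv x * (x * y) * (sinv y * sinv x) = sinv y * sinv x"
    by (simp add: sinv_props)
qed

lemma idem_conjugate:
  assumes e: "idem (e::'a)"
  shows "idem (sinv p * e * p)"
proof -
  have "sinv p * e * p * (sinv p * e * p) = sinv p * (e * (p * sinv p)) * e * p"
    by (simp add: mult.assoc)
  also have "\<dots> = (sinv p * p * sinv p) * (e * e) * p"
    by (simp add: idem_commute[OF e idem_mult_sinv] mult.assoc)
  finally show ?thesis
    using e by (simp add: idem_def sinv_props)
qed

lemma range_idem_mult:
  assumes e: "idem (e::'a)"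
  shows "e * z * sinv (e * z) = e * (z * sinv z)"
proof -
  have "e * z * sinv (e * z) = e * (z * sinv z) * e"
    by (simp add: sinv_mult sinv_idem[OF e] mult.assoc)
  also have "\<dots> = e * (e * (z * sinv z))"
    by (metis idem_commute[OF idem_mult_sinv e] mult.assoc)
  finally show ?thesis using e by (simp add: idem_left_absorb)
qed

lemma range_mult_below: "(x::'a) * c * sinv (x * c) * (x * sinv x) = x * c * sinv (x * c)"
  by (simp add: sinv_mult mult.assoc)

lemma range_mult_mult_sinv: "(y::'a) * a * sinv a * sinv (y * a * sinv a) = y * a * sinv (y * a)"
  by (simp add: sinv_mult mult.assoc sinv_idem[OF idem_mult_sinv])

lemma eq_if_same_range:
  assumes st: "idem (sinv (s::'a) * t)" and range: "s * sinv s = t * sinv t"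
  shows "s = t"
proof -
  define g where "g = sinv s * t"
  have ts: "sinv t * s = g"
    using sinv_idem[OF st] by (simp add: sinv_mult g_def)
  have "s = t * sinv t * s" using range sinv_props[of s] by simp
  also have "\<dots> = t * g" by (simp add: ts mult.assoc)
  finally have s: "s = t * g" .
  have "t = s * sinv s * t" using range sinv_props[of t] by simp
  also have "\<dots> = s * g" by (simp add: g_def mult.assoc)
  finally have t: "t = s * g" .
  have gg: "g * g = g" using st by (simp add: idem_def g_def)
  have "s = t * g" by (rule s)
  also have "\<dots> = s * (g * g)" using t by (simp add: mult.assoc)
  also have "\<dots> = t" using t gg by simp
  finally show ?thesis .
qed

lemma restrictions_eq:
  assumes e: "idem (e::'a)" and ep: "e * (p * sinv p) = e" and eq: "e * (q * sinv q) = e"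
    and pq: "idem (sinv p * e * q)"
  shows "e * p = e * q"
proof (rule eq_if_same_range)
  show "idem (sinv (e * p) * (e * q))"
    using pq by (simp add: sinv_mult sinv_idem[OF e] mult.assoc idem_left_absorb[OF e])
  show "e * p * sinv (e * p) = e * q * sinv (e * q)"
    using ep eq by (simp add: range_idem_mult[OF e])
qed

lemma below_range_of_below_range_mult:
  assumes "e * ((x::'a) * c * sinv (x * c)) = e"
  shows "e * (x * sinv x) = e"
proof -
  have "e * (x * sinv x) = e * (x * c * sinv (x * c)) * (x * sinv x)"
    using assms by simp
  also have "\<dots> = e * (x * c * sinv (x * c) * (x * sinv x))"
    by (simp only: mult.assoc)
  also have "\<dots> = e"
    using assms by (simp only: range_mult_below)
  finally show ?thesis .
qed

end

inductive_set words :: "'a::semigroup_mult list \<Rightarrow> 'a set" for gs where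
  gen: "i < length gs \<Longrightarrow> gs ! i \<in> words gs"
| sinv_gen: "i < length gs \<Longrightarrow> sinv (gs ! i) \<in> words gs"
| mult_gen: "x \<in> words gs \<Longrightarrow> i < length gs \<Longrightarrow> x * gs ! i \<in> words gs"
| mult_sinv_gen: "x \<in> words gs \<Longrightarrow> i < length gs \<Longrightarrow> x * sinv (gs ! i) \<in> words gs"

lemma words_mult:
  assumes x: "x \<in> words gs" and "y \<in> words gs"
  shows "x * y \<in> words gs"
  using assms(2)
proof induction
  case (mult_gen y i)
  then show ?case by (metis words.mult_gen mult.assoc)
next
  case (mult_sinv_gen y i)
  then show ?case by (metis words.mult_sinv_gen mult.assoc)
qed (simp_all add: x words.intros)

context inverse_semigroup
begin

lemma sinv_words: "(x::'a) \<in> words gs \<Longrightarrow> sinv x \<in> words gs"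
  by (induction rule: words.induct) (simp_all add: sinv_mult words_mult words.intros)

lemma inv_gen_subset_words: "inv_gen (set gs) \<subseteq> (words gs :: 'a set)"
proof
  fix x :: 'a
  assume "x \<in> inv_gen (set gs)"
  then show "x \<in> words gs"
    by induction (auto simp: in_set_conv_nth sinv_words words_mult intro: words.gen)
qed

end

locale idempotent_pure_hom = inverse_semigroup "TYPE('a)"
  for f :: "'a::semigroup_mult \<Rightarrow> 'b::semigroup_mult" +
  assumes hom: "semigroup_hom f"
    and pure: "idempotent_pure f"
begin

lemma f_mult [simp]: "f (x * y) = f x * f y"
  using hom unfolding semigroup_hom_def by blast

lemma idem_if_same_image:
  assumes "idem y" and "f x = f y"
  shows "idem x"
proof -
  have "f y * f y = f y" using assms(1) f_mult by (metis idem_def)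
  then show ?thesis
    using pure assms(2) unfolding idempotent_pure_def idem_def by simp
qed

lemma below_range_gen:
  assumes e: "idem e" and fq: "f q = f (a * sinv a)"
    and eqa: "e * (q * a * sinv (q * a)) = e"
  shows "e * (a * sinv a) = e"
proof -
  have q: "idem q" using idem_if_same_image[OF idem_mult_sinv fq] .
  have "q * a * sinv (q * a) = q * (a * sinv a) * q"
    by (simp add: sinv_mult sinv_idem[OF q] mult.assoc)
  also have "\<dots> = q * (q * (a * sinv a))"
    by (metis idem_commute[OF idem_mult_sinv q] mult.assoc)
  also have "\<dots> = q * (a * sinv a)"
    using q by (rule idem_left_absorb)
  finally have "e * (q * (a * sinv a)) = e" using eqa by simp
  moreover have "e * (q * (a * sinv a)) * (a * sinv a) = e * (q * (a * sinv a))"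
    using idem_mult_sinv[of a] by (simp add: idem_def mult.assoc)
  ultimately show ?thesis by simp
qed

lemma below_range_sinv_gen:
  assumes e: "idem e" and fq: "f q = f (sinv a)"
    and eqa: "e * (q * a * sinv (q * a)) = e"
  shows "e * (sinv a * a) = e"
proof -
  define t where "t = e * q * a"
  have "f t = f (e * (sinv a * a))" by (simp add: t_def fq mult.assoc)
  then have t: "idem t" using idem_if_same_image idem_mult[OF e idem_sinv_mult] by blast
  have "t = t * sinv t" using t by (simp add: sinv_idem idem_def)
  also have "\<dots> = e * (q * a) * sinv (e * (q * a))" by (simp add: t_def mult.assoc)
  also have "\<dots> = e" using eqa by (simp only: range_idem_mult[OF e])
  finally have "t = e" .
  have "e * (sinv a * a) = t * (sinv a * a)" using \<open>t = e\<close> by simp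
  also have "\<dots> = t" by (simp add: t_def mult.assoc)
  finally show ?thesis using \<open>t = e\<close> by simp
qed

lemma below_range_mult:
  assumes e: "idem e" and ep: "e * (p * sinv p) = e" and fq: "f q = f p"
    and eqa: "e * (q * a * sinv (q * a)) = e"
  shows "e * (p * a * sinv (p * a)) = e"
proof -
  have eq: "e * (q * sinv q) = e" using below_range_of_below_range_mult[OF eqa] .
  have "f (sinv p * e * q) = f (sinv p * e * p)" by (simp add: fq)
  then have "idem (sinv p * e * q)" using idem_if_same_image idem_conjugate[OF e] by blast
  then have epq: "e * p = e * q" using restrictions_eq[OF e ep eq] by blast
  have "e * (p * a * sinv (p * a)) = e * (p * a) * sinv (e * (p * a))"
    by (rule range_idem_mult[OF e, symmetric])
  also have "\<dots> = e * (q * a) * sinv (e * (q * a))"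
    by (metis epq mult.assoc)
  also have "\<dots> = e * (q * a * sinv (q * a))"
    by (rule range_idem_mult[OF e])
  finally show ?thesis using eqa by simp
qed

lemma below_range_mult_sinv:
  assumes e: "idem e" and ep: "e * (p * sinv p) = e" and fq: "f q = f (p * sinv a)"
    and eqa: "e * (q * a * sinv (q * a)) = e"
  shows "e * (p * sinv a * sinv (p * sinv a)) = e"
proof -
  have "f (sinv p * e * (q * a)) = f (sinv p * e * p * (sinv a * a))" by (simp add: fq mult.assoc)
  then have "idem (sinv p * e * (q * a))"
    using idem_if_same_image idem_mult[OF idem_conjugate[OF e] idem_sinv_mult] by blast
  then have epq: "e * p = e * (q * a)" using restrictions_eq[OF e ep eqa] by blast
  have "e * (p * sinv a * sinv (p * sinv a)) = e * (p * sinv a) * sinv (e * (p * sinv a))"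
    by (rule range_idem_mult[OF e, symmetric])
  also have "\<dots> = e * (q * a * sinv a) * sinv (e * (q * a * sinv a))"
    by (metis epq mult.assoc)
  also have "\<dots> = e * (q * a * sinv a * sinv (q * a * sinv a))"
    by (rule range_idem_mult[OF e])
  also have "\<dots> = e * (q * a * sinv (q * a))"
    by (simp only: range_mult_mult_sinv)
  finally show ?thesis using eqa by simp
qed

definition labels :: "'a list \<Rightarrow> 'a \<Rightarrow> ('b \<times> nat) set" where
  "labels gs e = {(f p, i) | p i. i < length gs \<and> e * (p * gs ! i * sinv (p * gs ! i)) = e}"

lemma labels_subset_length: "labels gs e \<subseteq> UNIV \<times> {..<length gs}"
  by (auto simp: labels_def)

lemma labels_antimono:
  assumes "e' * e = e'"
  shows "labels gs e \<subseteq> labels gs e'"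
proof
  fix l assume "l \<in> labels gs e"
  then obtain p i where l: "l = (f p, i)" "i < length gs" "e * (p * gs ! i * sinv (p * gs ! i)) = e"
    unfolding labels_def by blast
  have "e' * (p * gs ! i * sinv (p * gs ! i)) = e' * e * (p * gs ! i * sinv (p * gs ! i))"
    using assms by simp
  also have "\<dots> = e' * (e * (p * gs ! i * sinv (p * gs ! i)))" by (simp only: mult.assoc)
  also have "\<dots> = e'" using l(3) assms by simp
  finally show "l \<in> labels gs e'" using l unfolding labels_def by blast
qed

lemma label_of_range:
  assumes "i < length gs" and "x * sinv x = p * gs ! i * sinv (p * gs ! i)"
  shows "(f p, i) \<in> labels gs (x * sinv x)"
proof -
  have "x * sinv x * (p * gs ! i * sinv (p * gs ! i)) = x * sinv x"
    using idem_mult_sinv[of x] unfolding idem_def by (simp only: assms(2))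
  then show ?thesis using assms(1) unfolding labels_def by blast
qed

lemma labels_subset_witness:
  assumes "labels gs (x * sinv x) \<subseteq> labels gs e"
    and "i < length gs" and "x * sinv x = p * gs ! i * sinv (p * gs ! i)"
  obtains q where "f q = f p" and "e * (q * gs ! i * sinv (q * gs ! i)) = e"
proof -
  have "(f p, i) \<in> labels gs e"
    using assms(1) label_of_range[OF assms(2,3)] by (rule subsetD)
  then obtain q j where "(f p, i) = (f q, j)" and "e * (q * gs ! j * sinv (q * gs ! j)) = e"
    unfolding labels_def by blast
  then show ?thesis using that by simp
qed

lemma range_word:
  assumes "(x::'a) \<in> words gs"
  obtains p i where "i < length gs" and "x * sinv x = p * gs ! i * sinv (p * gs ! i)"
  using assms
proof cases
  case (gen i)
  then show ?thesis using that[of i "gs ! i * sinv (gs ! i)"] by (simp add: mult.assoc)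
next
  case (sinv_gen i)
  then show ?thesis
    using that[of i "sinv (gs ! i)"] idem_sinv_mult[of "gs ! i"]
    by (simp add: sinv_idem idem_def)
next
  case (mult_gen y i)
  then show ?thesis using that by blast
next
  case (mult_sinv_gen y i)
  then show ?thesis
    using that[of i "y * sinv (gs ! i)"] range_mult_mult_sinv[of y "sinv (gs ! i)"] by simp
qed

lemma labels_range_word_nonempty: "x \<in> words gs \<Longrightarrow> labels gs (x * sinv x) \<noteq> {}"
  by (metis range_word label_of_range empty_iff)

lemma below_range_if_labels_subset:
  assumes "x \<in> words gs" and "idem e" and "labels gs (x * sinv x) \<subseteq> labels gs e"
  shows "e * (x * sinv x) = e"
  using assms
proof (induction arbitrary: e)
  case (gen i)
  have "gs ! i * sinv (gs ! i) = gs ! i * sinv (gs ! i) * gs ! i * sinv (gs ! i * sinv (gs ! i) * gs ! i)"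
    by (simp add: mult.assoc)
  with gen obtain q where "f q = f (gs ! i * sinv (gs ! i))"
    and "e * (q * gs ! i * sinv (q * gs ! i)) = e"
    by (blast elim: labels_subset_witness)
  then show ?case using below_range_gen gen.prems(1) by blast
next
  case (sinv_gen i)
  have "sinv (gs ! i) * sinv (sinv (gs ! i)) = sinv (gs ! i) * gs ! i * sinv (sinv (gs ! i) * gs ! i)"
    using idem_sinv_mult[of "gs ! i"] by (simp add: sinv_idem idem_def)
  with sinv_gen obtain q where "f q = f (sinv (gs ! i))"
    and "e * (q * gs ! i * sinv (q * gs ! i)) = e"
    by (blast elim: labels_subset_witness)
  then show ?case using below_range_sinv_gen sinv_gen.prems(1) by simp
next
  case (mult_gen x i)
  have "labels gs (x * sinv x) \<subseteq> labels gs (x * gs ! i * sinv (x * gs ! i))"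
    by (rule labels_antimono[OF range_mult_below])
  then have ex: "e * (x * sinv x) = e" using mult_gen by blast
  from mult_gen obtain q where "f q = f x" and "e * (q * gs ! i * sinv (q * gs ! i)) = e"
    by (blast elim: labels_subset_witness)
  then show ?case using below_range_mult mult_gen.prems(1) ex by blast
next
  case (mult_sinv_gen x i)
  have "labels gs (x * sinv x) \<subseteq> labels gs (x * sinv (gs ! i) * sinv (x * sinv (gs ! i)))"
    by (rule labels_antimono[OF range_mult_below])
  then have ex: "e * (x * sinv x) = e" using mult_sinv_gen by blast
  have "x * sinv (gs ! i) * sinv (x * sinv (gs ! i))
      = x * sinv (gs ! i) * gs ! i * sinv (x * sinv (gs ! i) * gs ! i)"
    using range_mult_mult_sinv[of x "sinv (gs ! i)"] by simp
  with mult_sinv_gen obtain q where "f q = f (x * sinv (gs ! i))"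
    and "e * (q * gs ! i * sinv (q * gs ! i)) = e"
    by (blast elim: labels_subset_witness)
  then show ?case using below_range_mult_sinv mult_sinv_gen.prems(1) ex by blast
qed

lemma word_eq_if_same_image_and_labels:
  assumes x: "x \<in> words gs" and y: "y \<in> words gs"
    and image: "f x = f y" and labels: "labels gs (x * sinv x) = labels gs (y * sinv y)"
  shows "x = y"
proof (rule eq_if_same_range)
  have "f (sinv x * y) = f (sinv x * x)" using image by simp
  then show "idem (sinv x * y)" using idem_if_same_image idem_sinv_mult by blast
  have "y * sinv y * (x * sinv x) = y * sinv y"
    using below_range_if_labels_subset[OF x idem_mult_sinv] labels by simp
  moreover have "x * sinv x * (y * sinv y) = x * sinv x"
    using below_range_if_labels_subset[OF y idem_mult_sinv] labels by simp
  ultimately show "x * sinv x = y * sinv y"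
    using idem_commute[OF idem_mult_sinv idem_mult_sinv, of x y] by simp
qed

lemma finite_card_UNIV_le_if_generated:
  assumes gen: "inv_gen (set gs) = (UNIV :: 'a set)" and fin: "finite (UNIV :: 'b set)"
  shows "finite (UNIV :: 'a set)
    \<and> card (UNIV :: 'a set) \<le> card (UNIV :: 'b set) * (2 ^ (length gs * card (UNIV :: 'b set)) - 1)"
proof -
  define code where "code x = (f x, labels gs (x * sinv x))" for x
  define L where "L = (UNIV :: 'b set) \<times> {..<length gs}"
  define C where "C = (UNIV :: 'b set) \<times> (Pow L - {{}})"
  have words: "x \<in> words gs" for x using inv_gen_subset_words gen by blast
  have "inj code"
    by (rule injI) (simp add: code_def word_eq_if_same_image_and_labels[OF words words])
  moreover have "range code \<subseteq> C"
    using labels_subset_length labels_range_word_nonempty words by (auto simp: code_def C_def L_def)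
  moreover have "finite C" using fin by (simp add: C_def L_def)
  moreover have "card C = card (UNIV :: 'b set) * (2 ^ (length gs * card (UNIV :: 'b set)) - 1)"
    using fin by (simp add: C_def L_def card_cartesian_product card_Pow card_Diff_singleton mult.commute)
  ultimately show ?thesis
    by (metis card_image card_mono finite_imageD finite_subset)
qed

end

theorem corollary3:
  fixes f :: "'a::semigroup_mult \<Rightarrow> 'b::{finite, semigroup_mult}"
    and k n :: nat
  assumes "is_inverse_semigroup TYPE('a)"
    and "\<exists>gs :: 'a list. length gs = k \<and> inv_gen (set gs) = UNIV"
    and "semigroup_hom f" and "surj f" and "idempotent_pure f"
    and "card (UNIV :: 'b set) = n"
  shows "finite (UNIV :: 'a set) \<and> card (UNIV :: 'a set) \<le> n * (2 ^ (k * n) - 1)"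
proof -
  interpret idempotent_pure_hom f
    using assms(1,3,5) by unfold_locales
  obtain gs :: "'a list" where "length gs = k" and "inv_gen (set gs) = UNIV"
    using assms(2) by blast
  then show ?thesis
    using finite_card_UNIV_le_if_generated[of gs] assms(6) by simp
qed

end
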